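(* Let $x\in\mathrm{dom}(\mathcal R)$ satisfy $\mathcal R(x)=\inf\{\mathcal R(z):z\in\mathbb X,Az=Ax\}$, let $x_\alpha\in R_\alpha(Ax)$, $\alpha>0$, be any selection, and let $\phi\in\Phi$. The following are equivalent: (i) $\mathcal F(\sigma_x)\le\phi$ pointwise on $[0,\infty)$; (ii) $\sigma_x(\alpha)\le\sup_{t\ge0}\big(\phi(t)-\frac t{2\alpha}\big)$ for all $\alpha>0$; (iii) $\mathcal R(x)-\mathcal R(z)\le\phi(\|Ax-Az\|^2_{\mathbb Y})$ for all $z\in\mathbb X$. In particular, $\mathcal R(x)-\mathcal R(z)\le(\mathcal F(\sigma_x))(\|Ax-Az\|_{\mathbb Y}^2)$ for all $z\in\mathbb X$.
   Context: Standing setting: $\mathbb X$ real Banach space, $\tau$ a topology with $(\mathbb X,\tau)$ locally convex Hausdorff; $\mathcal R:\mathbb X\to(-\infty,\infty]$ proper convex with $\tau$-compact sublevel sets; $\mathbb Y$ real Hilbert space; $A:\mathbb X\to\mathbb Y$ linear, $\tau$-to-weak continuous. $T_\alpha(x,g):=\frac1{2\alpha}\|g-Ax\|_{\mathbb Y}^2+\mathcal R(x)$, $R_\alpha(g):=\operatorname{argmin}_{x\in\mathrm{dom}(\mathcal R)}T_\alpha(x,g)$. Defect: $\sigma_x(\alpha):=T_\alpha(x,Ax)-T_\alpha(x_\alpha,Ax)$ for $\alpha>0$. $\Phi$ is the set of concave upper semicontinuous functions $\phi:[0,\infty)\to[0,\infty)$. For a function $\sigma:(0,\infty)\to[0,\infty]$,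 $\mathcal F(\sigma):[0,\infty)\to[-\infty,\infty)$ is defined by $(\mathcal F(\sigma))(t):=\inf_{\alpha>0}\big(\sigma(\alpha)+\frac t{2\alpha}\big)$. *)

theory Defs
  imports "HOL-Analysis.Analysis"
begin

definition lc_hausdorff_tvs :: "'a::real_vector topology \<Rightarrow> bool" where
  "lc_hausdorff_tvs \<tau> \<longleftrightarrow>
     topspace \<tau> = UNIV \<and>
     continuous_map (prod_topology \<tau> \<tau>) \<tau> (\<lambda>(x, y). x + y) \<and>
     continuous_map (prod_topology euclideanreal \<tau>) \<tau> (\<lambda>(c, x). c *\<^sub>R x) \<and>
     (\<forall>U. openin \<tau> U \<and> 0 \<in> U \<longrightarrow> (\<exists>V. openin \<tau> V \<and> convex V \<and> 0 \<in> V \<and> V \<subseteq> U)) \<and>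
     Hausdorff_space \<tau>"

definition weak_topology :: "'b::real_inner topology" where
  "weak_topology = topology_generated_by {{y. inner y v \<in> U} | v U. open U}"

definition proper_convex :: "('a::real_vector \<Rightarrow> ereal) \<Rightarrow> bool" where
  "proper_convex R \<longleftrightarrow>
     (\<forall>x. R x \<noteq> -\<infinity>) \<and> (\<exists>x. R x < \<infinity>) \<and>
     (\<forall>x y t. 0 < t \<and> t < 1 \<longrightarrow>
        R ((1 - t) *\<^sub>R x + t *\<^sub>R y) \<le> ereal (1 - t) * R x + ereal t * R y)"

definition dom_R :: "('a \<Rightarrow> ereal) \<Rightarrow> 'a set" where
  "dom_R R = {x. R x < \<infinity>}"

definition Tik :: "('a \<Rightarrow> ereal) \<Rightarrow> ('a \<Rightarrow> 'b::real_normed_vector) \<Rightarrow> real \<Rightarrow> 'a \<Rightarrow> 'b \<Rightarrow> ereal" where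
  "Tik R A \<alpha> x g = ereal (1 / (2 * \<alpha>) * (norm (g - A x))\<^sup>2) + R x"

definition Ralpha :: "('a \<Rightarrow> ereal) \<Rightarrow> ('a \<Rightarrow> 'b::real_normed_vector) \<Rightarrow> real \<Rightarrow> 'b \<Rightarrow> 'a set" where
  "Ralpha R A \<alpha> g = {x \<in> dom_R R. \<forall>z \<in> dom_R R. Tik R A \<alpha> x g \<le> Tik R A \<alpha> z g}"

definition defect :: "('a \<Rightarrow> ereal) \<Rightarrow> ('a \<Rightarrow> 'b::real_normed_vector) \<Rightarrow> 'a \<Rightarrow> (real \<Rightarrow> 'a) \<Rightarrow> real \<Rightarrow> ereal" where
  "defect R A x xa \<alpha> = Tik R A \<alpha> x (A x) - Tik R A \<alpha> (xa \<alpha>) (A x)"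

definition Ftrans :: "(real \<Rightarrow> ereal) \<Rightarrow> real \<Rightarrow> ereal" where
  "Ftrans \<sigma> t = (INF \<alpha>\<in>{0<..}. \<sigma> \<alpha> + ereal (t / (2 * \<alpha>)))"

definition usc_on :: "real set \<Rightarrow> (real \<Rightarrow> real) \<Rightarrow> bool" where
  "usc_on S f \<longleftrightarrow> (\<forall>c. openin (top_of_set S) {t \<in> S. f t < c})"

definition PhiClass :: "(real \<Rightarrow> real) set" where
  "PhiClass = {\<phi>. (\<forall>t\<ge>0. \<phi> t \<ge> 0) \<and> concave_on {0..} \<phi> \<and> usc_on {0..} \<phi>}"

end

theory Submission imports Defs begin

text \<open>Minimality of \<open>x\<^sub>\<alpha>\<close> for the Tikhonov functional gives
  \<open>R x - R z \<le> \<sigma>\<^sub>x(\<alpha>) + \<parallel>Ax - Az\<parallel>\<^sup>2 / (2\<alpha>)\<close> for all \<open>z\<close> and \<open>\<alpha>\<close>, with equality at \<open>z = x\<^sub>\<alpha>\<close>.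
  Taking the infimum over \<open>\<alpha>\<close> gives the final bound and (i) \<open>\<Longrightarrow>\<close> (iii); evaluating (iii)
  at \<open>z = x\<^sub>\<alpha>\<close> gives (ii). For (ii) \<open>\<Longrightarrow>\<close> (i), a nonnegative concave upper semicontinuous
  \<open>\<phi>\<close> lies, up to \<open>\<epsilon>\<close>, below an affine function through \<open>(t, \<phi> t)\<close> with positive slope \<open>s\<close>,
  and the choice \<open>\<alpha> = 1/(2s)\<close> turns (ii) into \<open>F(\<sigma>\<^sub>x)(t) \<le> \<phi>(t) + \<epsilon>\<close>.
  The compactness, linearity and minimality hypotheses only ensure that a selection \<open>x\<^sub>\<alpha>\<close>
  exists; the equivalences hold for any selection.\<close>

lemma concave_on_le_secant_line:
  fixes f :: "real \<Rightarrow> real"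
  assumes f: "concave_on I f" and I: "t \<in> I" "w \<in> I" "u \<in> I"
    and "t < w" "u \<notin> {t<..<w}"
  shows "f u \<le> f t + (f w - f t) / (w - t) * (u - t)"
proof -
  have g: "convex_on I (\<lambda>x. - f x)" using f by (simp add: concave_on_def)
  consider "u = t" | "u = w" | "w < u" | "u < t" using assms(5,6) by force
  then show ?thesis
  proof cases
    case 3
    have "(f u - f t) / (u - t) \<le> (f w - f t) / (w - t)"
      using convex_on_slope_le(1)[OF g I(1,3) \<open>t < w\<close> 3] \<open>t < w\<close> 3
      by (simp add: divide_simps) argo
    then show ?thesis using 3 \<open>t < w\<close> by (simp add: divide_simps algebra_simps)
  next
    case 4
    have "(f w - f t) / (w - t) \<le> (f w - f u) / (w - u)"
      using convex_on_slope_le(2)[OF g I(3,2) 4 \<open>t < w\<close>] 4 \<open>t < w\<close>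
      by (simp add: divide_simps) argo
    moreover have "(f w - f u) / (w - u) \<le> (f t - f u) / (t - u)"
      using convex_on_slope_le(1)[OF g I(3,2) 4 \<open>t < w\<close>] 4 \<open>t < w\<close>
      by (simp add: divide_simps) argo
    ultimately show ?thesis using 4 \<open>t < w\<close> by (simp add: divide_simps algebra_simps)
  qed (use \<open>t < w\<close> in auto)
qed

lemma concave_nonneg_secant_slope_nonneg:
  fixes f :: "real \<Rightarrow> real"
  assumes f: "concave_on {0..} f" and nonneg: "\<And>u. u \<ge> 0 \<Longrightarrow> f u \<ge> 0"
    and "0 \<le> t" "t < w"
  shows "(f w - f t) / (w - t) \<ge> 0"
proof (rule ccontr)
  define s where "s = (f w - f t) / (w - t)"
  assume "\<not> ?thesis"
  then have "s < 0" by (simp add: s_def)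
  define u where "u = w + (f t + 1) / - s"
  have "w < u" using \<open>s < 0\<close> nonneg[OF \<open>0 \<le> t\<close>] by (simp add: u_def field_simps)
  then have "f u \<le> f t + s * (u - t)"
    unfolding s_def using assms by (intro concave_on_le_secant_line[OF f]) auto
  also have "\<dots> \<le> f t + s * (u - w)"
    using \<open>s < 0\<close> \<open>t < w\<close> by (simp add: mult_left_mono_neg)
  also have "\<dots> = -1" using \<open>s < 0\<close> by (simp add: u_def field_simps)
  finally show False using nonneg[of u] \<open>w < u\<close> assms(3,4) by linarith
qed

text \<open>The slope is that of a secant from \<open>t\<close> to a point where upper semicontinuity
  keeps \<open>\<phi>\<close> below \<open>\<phi> t + \<epsilon>\<close>; adding a little to it makes the slope positive.\<close>

lemma PhiClass_affine_majorant:
  assumes "\<phi> \<in> PhiClass" "0 \<le> t" "0 < \<epsilon>"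
  shows "\<exists>s>0. \<forall>u\<ge>0. \<phi> u \<le> \<phi> t + \<epsilon> + s * (u - t)"
proof -
  have nonneg: "\<And>u. u \<ge> 0 \<Longrightarrow> \<phi> u \<ge> 0" and concave: "concave_on {0..} \<phi>"
    and usc: "usc_on {0..} \<phi>" using assms(1) by (auto simp: PhiClass_def)
  have "openin (top_of_set {0..}) {u \<in> {0..}. \<phi> u < \<phi> t + \<epsilon>}"
    using usc by (simp add: usc_on_def)
  moreover have "t \<in> {u \<in> {0..}. \<phi> u < \<phi> t + \<epsilon>}" using assms by auto
  ultimately obtain d where "d > 0" and near: "\<And>u. u \<ge> 0 \<Longrightarrow> dist u t < d \<Longrightarrow> \<phi> u < \<phi> t + \<epsilon>"
    unfolding openin_euclidean_subtopology_iff by auto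
  define w where "w = t + d / 2"
  define s\<^sub>0 where "s\<^sub>0 = (\<phi> w - \<phi> t) / (w - t)"
  define s where "s = s\<^sub>0 + \<epsilon> / (t + 1)"
  have "t < w" using \<open>d > 0\<close> by (simp add: w_def)
  have "s\<^sub>0 \<ge> 0"
    unfolding s\<^sub>0_def using concave nonneg \<open>0 \<le> t\<close> \<open>t < w\<close>
    by (rule concave_nonneg_secant_slope_nonneg)
  have "s > 0" using \<open>s\<^sub>0 \<ge> 0\<close> assms(2,3) by (simp add: s_def add_nonneg_pos)
  moreover have "\<phi> u \<le> \<phi> t + \<epsilon> + s * (u - t)" if "u \<ge> 0" for u
  proof (cases "u \<in> {t<..<w}")
    case True
    then have "\<phi> u < \<phi> t + \<epsilon>" using near[OF that] by (simp add: w_def dist_real_def)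
    moreover have "s * (u - t) \<ge> 0" using \<open>s > 0\<close> True by simp
    ultimately show ?thesis by linarith
  next
    case False
    then have secant: "\<phi> u \<le> \<phi> t + s\<^sub>0 * (u - t)"
      unfolding s\<^sub>0_def using that assms(2) \<open>t < w\<close>
      by (intro concave_on_le_secant_line[OF concave]) auto
    have "\<epsilon> / (t + 1) * (t - u) \<le> \<epsilon> / (t + 1) * (t + 1)"
      using that assms(2,3) by (intro mult_left_mono) auto
    moreover have "s * (u - t) = s\<^sub>0 * (u - t) - \<epsilon> / (t + 1) * (t - u)"
      by (simp add: s_def ring_distribs)
    ultimately show ?thesis using secant assms(2) by simp
  qed
  ultimately show ?thesis by blast
qed

lemma Ftrans_le_if_le_conjugate:
  assumes "\<phi> \<in> PhiClass" "0 \<le> t"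
    and conj: "\<forall>\<alpha>>0. \<sigma> \<alpha> \<le> (SUP u\<in>{0..}. ereal (\<phi> u - u / (2 * \<alpha>)))"
  shows "Ftrans \<sigma> t \<le> ereal (\<phi> t)"
proof (rule ereal_le_epsilon2)
  fix \<epsilon> :: real assume "0 < \<epsilon>"
  obtain s where "s > 0" and majorant: "\<And>u. u \<ge> 0 \<Longrightarrow> \<phi> u \<le> \<phi> t + \<epsilon> + s * (u - t)"
    using PhiClass_affine_majorant[OF assms(1,2) \<open>0 < \<epsilon>\<close>] by blast
  define \<alpha> where "\<alpha> = 1 / (2 * s)"
  have "\<alpha> > 0" using \<open>s > 0\<close> by (simp add: \<alpha>_def)
  have slope: "u / (2 * \<alpha>) = s * u" for u using \<open>s > 0\<close> by (simp add: \<alpha>_def)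
  have "\<sigma> \<alpha> \<le> (SUP u\<in>{0..}. ereal (\<phi> u - u / (2 * \<alpha>)))" using conj \<open>\<alpha> > 0\<close> by blast
  also have "\<dots> \<le> ereal (\<phi> t + \<epsilon> - s * t)"
  proof (intro SUP_least)
    fix u :: real assume "u \<in> {0..}"
    then show "ereal (\<phi> u - u / (2 * \<alpha>)) \<le> ereal (\<phi> t + \<epsilon> - s * t)"
      using majorant[of u] unfolding slope by (simp add: algebra_simps)
  qed
  finally have "\<sigma> \<alpha> + ereal (t / (2 * \<alpha>)) \<le> ereal (\<phi> t + \<epsilon> - s * t) + ereal (s * t)"
    unfolding slope by (rule add_right_mono)
  moreover have "Ftrans \<sigma> t \<le> \<sigma> \<alpha> + ereal (t / (2 * \<alpha>))"
    unfolding Ftrans_def using \<open>\<alpha> > 0\<close> by (intro INF_lower) simp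
  ultimately show "Ftrans \<sigma> t \<le> ereal (\<phi> t) + ereal \<epsilon>" by simp
qed

lemma dom_R_real:
  assumes "R z \<noteq> -\<infinity>" "z \<in> dom_R R"
  obtains r where "R z = ereal r"
  using assms by (cases "R z") (auto simp: dom_R_def)

lemma defect_eq:
  assumes "\<And>z. R z \<noteq> -\<infinity>" "x \<in> dom_R R" "xa \<alpha> \<in> Ralpha R A \<alpha> (A x)"
  shows "defect R A x xa \<alpha> + ereal ((norm (A x - A (xa \<alpha>)))\<^sup>2 / (2 * \<alpha>)) = R x - R (xa \<alpha>)"
proof -
  have "xa \<alpha> \<in> dom_R R" using assms(3) by (simp add: Ralpha_def)
  then obtain r r\<^sub>\<alpha> where "R x = ereal r" "R (xa \<alpha>) = ereal r\<^sub>\<alpha>"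
    using dom_R_real assms(1,2) by metis
  then show ?thesis by (simp add: defect_def Tik_def)
qed

lemma R_diff_le_defect:
  assumes "\<And>z. R z \<noteq> -\<infinity>" "x \<in> dom_R R" "xa \<alpha> \<in> Ralpha R A \<alpha> (A x)"
  shows "R x - R z \<le> defect R A x xa \<alpha> + ereal ((norm (A x - A z))\<^sup>2 / (2 * \<alpha>))"
proof (cases "z \<in> dom_R R")
  case True
  have "xa \<alpha> \<in> dom_R R" and "Tik R A \<alpha> (xa \<alpha>) (A x) \<le> Tik R A \<alpha> z (A x)"
    using assms(3) True by (simp_all add: Ralpha_def)
  moreover obtain r r\<^sub>\<alpha> r\<^sub>z where "R x = ereal r" "R (xa \<alpha>) = ereal r\<^sub>\<alpha>" "R z = ereal r\<^sub>z"
    using dom_R_real assms(1,2) True calculation(1) by metis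
  ultimately show ?thesis by (simp add: defect_def Tik_def)
next
  case False
  moreover obtain r where "R x = ereal r" using dom_R_real assms(1,2) by metis
  ultimately show ?thesis by (simp add: dom_R_def)
qed

lemma R_diff_le_Ftrans_defect:
  assumes "\<And>z. R z \<noteq> -\<infinity>" "x \<in> dom_R R" "\<forall>\<alpha>>0. xa \<alpha> \<in> Ralpha R A \<alpha> (A x)"
  shows "R x - R z \<le> Ftrans (defect R A x xa) ((norm (A x - A z))\<^sup>2)"
  unfolding Ftrans_def using assms by (auto intro!: INF_greatest R_diff_le_defect)

lemma defect_le_conjugate:
  assumes "\<And>z. R z \<noteq> -\<infinity>" "x \<in> dom_R R" "xa \<alpha> \<in> Ralpha R A \<alpha> (A x)"
    and "\<forall>z. R x - R z \<le> ereal (\<phi> ((norm (A x - A z))\<^sup>2))"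
  shows "defect R A x xa \<alpha> \<le> (SUP t\<in>{0..}. ereal (\<phi> t - t / (2 * \<alpha>)))"
proof -
  define n where "n = (norm (A x - A (xa \<alpha>)))\<^sup>2"
  have "defect R A x xa \<alpha> + ereal (n / (2 * \<alpha>)) \<le> ereal (\<phi> n)"
    using defect_eq[of R x xa \<alpha> A] assms by (simp add: n_def)
  then have "defect R A x xa \<alpha> \<le> ereal (\<phi> n - n / (2 * \<alpha>))"
    by (cases "defect R A x xa \<alpha>") auto
  also have "\<dots> \<le> (SUP t\<in>{0..}. ereal (\<phi> t - t / (2 * \<alpha>)))"
    by (rule SUP_upper) (simp add: n_def)
  finally show ?thesis .
qed

theorem lemma5p5:
  fixes \<tau> :: "'a::banach topology"
    and R :: "'a \<Rightarrow> ereal"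
    and A :: "'a \<Rightarrow> 'b::{real_inner, complete_space}"
    and x :: 'a and xa :: "real \<Rightarrow> 'a" and \<phi> :: "real \<Rightarrow> real"
  assumes "lc_hausdorff_tvs \<tau>"
    and "proper_convex R"
    and "\<forall>c::real. compactin \<tau> {z. R z \<le> ereal c}"
    and "linear A"
    and "continuous_map \<tau> weak_topology A"
    and "x \<in> dom_R R"
    and "R x = (INF z\<in>{z. A z = A x}. R z)"
    and "\<forall>\<alpha>>0. xa \<alpha> \<in> Ralpha R A \<alpha> (A x)"
    and "\<phi> \<in> PhiClass"
  shows "((\<forall>t\<ge>0. Ftrans (defect R A x xa) t \<le> ereal (\<phi> t)) \<longleftrightarrow>
          (\<forall>\<alpha>>0. defect R A x xa \<alpha> \<le> (SUP t\<in>{0..}. ereal (\<phi> t - t / (2 * \<alpha>))))) \<and>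
         ((\<forall>\<alpha>>0. defect R A x xa \<alpha> \<le> (SUP t\<in>{0..}. ereal (\<phi> t - t / (2 * \<alpha>)))) \<longleftrightarrow>
          (\<forall>z. R x - R z \<le> ereal (\<phi> ((norm (A x - A z))\<^sup>2)))) \<and>
         (\<forall>z. R x - R z \<le> Ftrans (defect R A x xa) ((norm (A x - A z))\<^sup>2))"
proof -
  have proper: "\<And>z. R z \<noteq> -\<infinity>" using assms(2) by (simp add: proper_convex_def)
  have bound: "\<forall>z. R x - R z \<le> Ftrans (defect R A x xa) ((norm (A x - A z))\<^sup>2)"
    using R_diff_le_Ftrans_defect[OF proper assms(6,8)] by blast
  have i_iii: "\<forall>z. R x - R z \<le> ereal (\<phi> ((norm (A x - A z))\<^sup>2))"
    if "\<forall>t\<ge>0. Ftrans (defect R A x xa) t \<le> ereal (\<phi> t)"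
    using bound that by (meson order_trans zero_le_power2)
  have iii_ii: "\<forall>\<alpha>>0. defect R A x xa \<alpha> \<le> (SUP t\<in>{0..}. ereal (\<phi> t - t / (2 * \<alpha>)))"
    if "\<forall>z. R x - R z \<le> ereal (\<phi> ((norm (A x - A z))\<^sup>2))"
    using defect_le_conjugate[OF proper assms(6) _ that] assms(8) by blast
  have ii_i: "\<forall>t\<ge>0. Ftrans (defect R A x xa) t \<le> ereal (\<phi> t)"
    if "\<forall>\<alpha>>0. defect R A x xa \<alpha> \<le> (SUP t\<in>{0..}. ereal (\<phi> t - t / (2 * \<alpha>)))"
    using Ftrans_le_if_le_conjugate[OF assms(9) _ that] by blast
  show ?thesis using i_iii iii_ii ii_i bound by argo
qed

end
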